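(* Let $(\mathscr{G},\mathscr{H},\mathscr{F},\iota_v,\varphi_p)$ be an equivariant sheaf of right cosets on a finite-dimensional real vector space $V$, let $\Lambda\subset V$ be a lattice, and let $p,q\ge2$ be multiplicatively independent natural numbers. Let $s\in\Gamma(V,\mathscr{F})$ and suppose there are $\Lambda$-periodic $A,B\in\Gamma(V,\mathscr{G})$ with $m_p^*(s)=As$ and $m_q^*(s)=Bs$. Then there exists a lattice $\Lambda'\subset\Lambda$ (depending on $s$) such that for every $z\in V\setminus\mathbb{Q}\Lambda$ and every $\lambda\in\Lambda'$ we have $s_{z+\lambda}=\iota_\lambda(s_z)$. If furthermore $\gcd(p,q)=1$, one may take $\Lambda'=\Lambda$.
   Context: $V$ carries its classical topology; $\mathbb{Q}\Lambda$ is the $\mathbb{Q}$-span of $\Lambda$. An equivariant sheaf of right cosets consists of: a sheaf of groups $\mathscr{G}$ on $V$, a subsheaf of subgroups $\mathscr{H}$, and the sheaf $\mathscr{F}=\mathscr{G}/\mathscr{H}$ of right cosets (pointed by the trivial coset $0_x$ in each stalk, with left $\mathscr{G}$-action), such that: (Dis) for every open $U$ and $f\in\mathscr{G}(U)$ the set $\{x\in U: f_x\notin\mathscr{H}_x\}$ meets every compact subset of $U$ in a finite set; for every $v\in V$ there are sheaf isomorphisms $\mathscr{G}\simeq t_v^*\mathscr{G}$ ($t_v(x)=x+v$) inducing $\iota_v:\mathscr{G}_x\to\mathscr{G}_{x+v}$ with $\iota_v\circ\iota_u=\iota_{u+v}$; for every real $p\neq0$ there are sheaf isomorphisms $\mathscr{G}\simeq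 m_p^*\mathscr{G}$ ($m_p(x)=px$) inducing $\varphi_p:\mathscr{G}_x\to\mathscr{G}_{px}$ with $\varphi_q\circ\varphi_p=\varphi_{pq}$; all preserve $\mathscr{H}$ (hence act on $\mathscr{F}$); and $\iota_{pv}\circ\varphi_p=\varphi_p\circ\iota_v$ on $\mathscr{G}_x$. For global sections, $(m_p^*s)_x=\varphi_p(s_{x/p})$ and $(t_v^*s)_x=\iota_v(s_{x-v})$. A lattice is a discrete subgroup spanning $V$; a section is $\Lambda$-periodic if $t_\lambda^*s=s$ for all $\lambda\in\Lambda$. *)

theory Defs
  imports "HOL-Analysis.Analysis" "HOL-Algebra.Coset"
begin

text \<open>Sheaves are modelled in the etale-space style: a sheaf of groups on V is given by
its stalk groups G x (all living in one ambient HOL type 'g) and the predicate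
sect U f ("f restricted to the open set U is a section over U"); germs are values.\<close>

definition sheaf_of_groups ::
  "('v::topological_space \<Rightarrow> 'g monoid) \<Rightarrow> ('v set \<Rightarrow> ('v \<Rightarrow> 'g) \<Rightarrow> bool) \<Rightarrow> bool" where
  "sheaf_of_groups G sect \<longleftrightarrow>
     (\<forall>x. group (G x)) \<and>
     (\<forall>U f. sect U f \<longrightarrow> open U \<and> (\<forall>x\<in>U. f x \<in> carrier (G x))) \<and>
     (\<forall>U W f. sect U f \<and> open W \<and> W \<subseteq> U \<longrightarrow> sect W f) \<and>
     (\<forall>U f g. sect U f \<and> (\<forall>x\<in>U. f x = g x) \<longrightarrow> sect U g) \<and>
     (\<forall>U f. open U \<and> (\<forall>x\<in>U. \<exists>W. open W \<and> x \<in> W \<and> W \<subseteq> U \<and> sect W f) \<longrightarrow> sect U f) \<and>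
     (\<forall>U f g x. sect U f \<and> sect U g \<and> x \<in> U \<and> f x = g x \<longrightarrow>
        (\<exists>W. open W \<and> x \<in> W \<and> W \<subseteq> U \<and> (\<forall>y\<in>W. f y = g y))) \<and>
     (\<forall>x a. a \<in> carrier (G x) \<longrightarrow> (\<exists>U f. x \<in> U \<and> sect U f \<and> f x = a)) \<and>
     (\<forall>U. open U \<longrightarrow> sect U (\<lambda>x. \<one>\<^bsub>G x\<^esub>)) \<and>
     (\<forall>U f g. sect U f \<and> sect U g \<longrightarrow> sect U (\<lambda>x. f x \<otimes>\<^bsub>G x\<^esub> g x)) \<and>
     (\<forall>U f. sect U f \<longrightarrow> sect U (\<lambda>x. inv\<^bsub>G x\<^esub> (f x)))"

text \<open>A subsheaf of subgroups, given by its stalks H x (the etale subspace is open).\<close>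
definition subsheaf_of_subgroups ::
  "('v::topological_space \<Rightarrow> 'g monoid) \<Rightarrow> ('v set \<Rightarrow> ('v \<Rightarrow> 'g) \<Rightarrow> bool) \<Rightarrow> ('v \<Rightarrow> 'g set) \<Rightarrow> bool" where
  "subsheaf_of_subgroups G sect H \<longleftrightarrow>
     (\<forall>x. subgroup (H x) (G x)) \<and>
     (\<forall>U f x. sect U f \<and> x \<in> U \<and> f x \<in> H x \<longrightarrow>
        (\<exists>W. open W \<and> x \<in> W \<and> W \<subseteq> U \<and> (\<forall>y\<in>W. f y \<in> H y)))"

text \<open>Global sections of the quotient sheaf F = G/H of cosets g H (stalkwise l_coset),
 i.e. functions into cosets which locally lift to sections of G.\<close>
definition coset_global_section ::
  "('v::topological_space \<Rightarrow> 'g monoid) \<Rightarrow> ('v set \<Rightarrow> ('v \<Rightarrow> 'g) \<Rightarrow> bool) \<Rightarrow> ('v \<Rightarrow> 'g set)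
    \<Rightarrow> ('v \<Rightarrow> 'g set) \<Rightarrow> bool" where
  "coset_global_section G sect H s \<longleftrightarrow>
     (\<forall>x. \<exists>W f. open W \<and> x \<in> W \<and> sect W f \<and> (\<forall>y\<in>W. s y = f y <#\<^bsub>G y\<^esub> H y))"

definition equivariant_sheaf_of_cosets ::
  "('v::euclidean_space \<Rightarrow> 'g monoid) \<Rightarrow> ('v set \<Rightarrow> ('v \<Rightarrow> 'g) \<Rightarrow> bool) \<Rightarrow> ('v \<Rightarrow> 'g set)
    \<Rightarrow> ('v \<Rightarrow> 'v \<Rightarrow> 'g \<Rightarrow> 'g) \<Rightarrow> (real \<Rightarrow> 'v \<Rightarrow> 'g \<Rightarrow> 'g) \<Rightarrow> bool" where
  "equivariant_sheaf_of_cosets G sect H iota phi \<longleftrightarrow>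
     sheaf_of_groups G sect \<and> subsheaf_of_subgroups G sect H \<and>
     \<comment> \<open>(Dis)\<close>
     (\<forall>U f K. sect U f \<and> compact K \<and> K \<subseteq> U \<longrightarrow> finite {x\<in>K. f x \<notin> H x}) \<and>
     \<comment> \<open>translations: iota v x : G_x \<rightarrow> G_(x+v), inducing G \<simeq> t_v^* G\<close>
     (\<forall>v x. iota v x \<in> iso (G x) (G (x + v))) \<and>
     (\<forall>v U f. open U \<longrightarrow>
        (sect U f \<longleftrightarrow> sect ((\<lambda>y. y + v) ` U) (\<lambda>y. iota v (y - v) (f (y - v))))) \<and>
     (\<forall>u v x g. g \<in> carrier (G x) \<longrightarrow> iota v (x + u) (iota u x g) = iota (u + v) x g) \<and>
     (\<forall>v x. iota v x ` H x = H (x + v)) \<and>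
     \<comment> \<open>dilations: phi p x : G_x \<rightarrow> G_(p x), inducing G \<simeq> m_p^* G\<close>
     (\<forall>p x. p \<noteq> 0 \<longrightarrow> phi p x \<in> iso (G x) (G (p *\<^sub>R x))) \<and>
     (\<forall>p U f. p \<noteq> 0 \<and> open U \<longrightarrow>
        (sect U f \<longleftrightarrow>
         sect ((\<lambda>y. p *\<^sub>R y) ` U) (\<lambda>y. phi p (inverse p *\<^sub>R y) (f (inverse p *\<^sub>R y))))) \<and>
     (\<forall>p q x g. p \<noteq> 0 \<and> q \<noteq> 0 \<and> g \<in> carrier (G x) \<longrightarrow>
        phi q (p *\<^sub>R x) (phi p x g) = phi (p * q) x g) \<and>
     (\<forall>p x. p \<noteq> 0 \<longrightarrow> phi p x ` H x = H (p *\<^sub>R x)) \<and>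
     \<comment> \<open>compatibility iota_(pv) o phi_p = phi_p o iota_v on G_x\<close>
     (\<forall>p v x g. p \<noteq> 0 \<and> g \<in> carrier (G x) \<longrightarrow>
        iota (p *\<^sub>R v) (p *\<^sub>R x) (phi p x g) = phi p (x + v) (iota v x g))"

definition is_lattice :: "'v::euclidean_space set \<Rightarrow> bool" where
  "is_lattice L \<longleftrightarrow> 0 \<in> L \<and> (\<forall>x\<in>L. \<forall>y\<in>L. x - y \<in> L) \<and> discrete L \<and> span L = UNIV"

definition rat_span :: "'v::real_vector set \<Rightarrow> 'v set" where
  "rat_span L = {x. \<exists>S c. finite S \<and> S \<subseteq> L \<and> (\<forall>l\<in>S. c l \<in> \<rat>) \<and> x = (\<Sum>l\<in>S. c l *\<^sub>R l)}"

definition mult_independent :: "nat \<Rightarrow> nat \<Rightarrow> bool" where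
  "mult_independent p q \<longleftrightarrow> (\<forall>a b::nat. p ^ a = q ^ b \<longrightarrow> a = 0 \<and> b = 0)"

end

theory Submission
  imports Defs
begin

text \<open>If the translation identity fails at \<open>(z, \<lambda>)\<close>, then \<open>m_p^* s = A s\<close> and the
\<open>\<Lambda>\<close>-periodicity of \<open>A\<close> make it fail at \<open>(p^a z, p^a \<lambda>)\<close> for every \<open>a\<close>, so for every \<open>a\<close>
one of \<open>p^a z\<close>, \<open>p^a (z + \<lambda>)\<close> lies in the support \<open>{x. s x \<noteq> H x}\<close>. But for \<open>w \<notin> \<rat>\<Lambda>\<close>
only finitely many \<open>p^a w\<close> lie in the support: by \<open>m_q^* s = B s\<close> and (Dis) near \<open>0\<close>, some
contraction \<open>q^-i p^a w\<close> is a point where \<open>B\<close> leaves \<open>H\<close>; a \<open>\<Lambda>\<close>-translate of it into a fixed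
ball is then a point of the finite set where \<open>B\<close> leaves \<open>H\<close>, and distinct \<open>a\<close> give distinct
points because \<open>w \<notin> \<rat>\<Lambda>\<close> and \<open>p, q\<close> are multiplicatively independent. This yields
\<open>\<Lambda>' = \<Lambda>\<close> without using \<open>gcd(p, q) = 1\<close>.\<close>

lemma lattice_diff: "is_lattice L \<Longrightarrow> a \<in> L \<Longrightarrow> b \<in> L \<Longrightarrow> a - b \<in> L"
  unfolding is_lattice_def by blast

lemma lattice_add: "is_lattice L \<Longrightarrow> a \<in> L \<Longrightarrow> b \<in> L \<Longrightarrow> a + b \<in> L"
  by (metis diff_0 diff_minus_eq_add is_lattice_def lattice_diff)

lemma lattice_scaleR_of_int:
  assumes "is_lattice L" "a \<in> L"
  shows "of_int k *\<^sub>R a \<in> L"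
proof (induction k rule: int_induct[where k = 0])
  case base
  then show ?case using assms(1) by (simp add: is_lattice_def)
next
  case (step1 i)
  then show ?case using lattice_add[OF assms(1) step1(2) assms(2)] by (simp add: scaleR_add_left)
next
  case (step2 i)
  then show ?case using lattice_diff[OF assms(1) step2(2) assms(2)] by (simp add: scaleR_diff_left)
qed

lemma lattice_scaleR_of_nat: "is_lattice L \<Longrightarrow> a \<in> L \<Longrightarrow> of_nat n *\<^sub>R a \<in> L"
  using lattice_scaleR_of_int[of L a "int n"] by simp

lemma lattice_sum:
  assumes "is_lattice L" "finite S" "\<And>b. b \<in> S \<Longrightarrow> f b \<in> L"
  shows "sum f S \<in> L"
  using assms(2,3)
  by (induction S rule: finite_induct) (use assms(1) in \<open>auto simp: lattice_add is_lattice_def\<close>)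

lemma lattice_covering_radius:
  fixes L :: "'v::euclidean_space set"
  assumes "is_lattice L"
  obtains R where "\<And>x. \<exists>\<mu>\<in>L. norm (x - \<mu>) \<le> R"
proof -
  obtain Bs where Bs: "Bs \<subseteq> L" "independent Bs" "L \<subseteq> span Bs"
    by (rule maximal_independent_subset)
  have fin: "finite Bs" using Bs(2) by (rule finiteI_independent)
  have "span Bs = UNIV"
    using assms Bs(3) unfolding is_lattice_def by (metis span_mono span_span top.extremum_uniqueI)
  have "\<exists>\<mu>\<in>L. norm (x - \<mu>) \<le> (\<Sum>v\<in>Bs. norm v)" for x
  proof -
    obtain u where u: "x = (\<Sum>v\<in>Bs. u v *\<^sub>R v)"
      using \<open>span Bs = UNIV\<close> span_finite[OF fin] by auto
    define \<mu> where "\<mu> = (\<Sum>v\<in>Bs. of_int \<lfloor>u v\<rfloor> *\<^sub>R v)"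
    have "\<mu> \<in> L"
      unfolding \<mu>_def using assms fin Bs(1) by (intro lattice_sum lattice_scaleR_of_int) auto
    have "norm (x - \<mu>) = norm (\<Sum>v\<in>Bs. (u v - of_int \<lfloor>u v\<rfloor>) *\<^sub>R v)"
      unfolding u \<mu>_def by (simp add: sum_subtractf scaleR_diff_left)
    also have "\<dots> \<le> (\<Sum>v\<in>Bs. norm ((u v - of_int \<lfloor>u v\<rfloor>) *\<^sub>R v))"
      by (rule norm_sum)
    also have "\<dots> \<le> (\<Sum>v\<in>Bs. norm v)"
    proof (rule sum_mono)
      fix v
      have "\<bar>u v - of_int \<lfloor>u v\<rfloor>\<bar> \<le> 1" by linarith
      then show "norm ((u v - of_int \<lfloor>u v\<rfloor>) *\<^sub>R v) \<le> norm v"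
        by (simp add: mult_left_le_one_le)
    qed
    finally show ?thesis using \<open>\<mu> \<in> L\<close> by blast
  qed
  then show ?thesis by (rule that)
qed

lemma zero_in_rat_span: "0 \<in> rat_span L"
  unfolding rat_span_def by (auto intro!: exI[of _ "{}"])

lemma rat_span_scaleR: "c \<in> \<rat> \<Longrightarrow> l \<in> L \<Longrightarrow> c *\<^sub>R l \<in> rat_span L"
  unfolding rat_span_def by (auto intro!: exI[of _ "{l}"] exI[of _ "\<lambda>_. c"])

lemma rat_span_add:
  assumes "x \<in> rat_span L" "y \<in> rat_span L"
  shows "x + y \<in> rat_span L"
proof -
  obtain S c where S: "finite S" "S \<subseteq> L" "\<forall>l\<in>S. c l \<in> \<rat>" "x = (\<Sum>l\<in>S. c l *\<^sub>R l)"
    using assms(1) unfolding rat_span_def by blast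
  obtain T d where T: "finite T" "T \<subseteq> L" "\<forall>l\<in>T. d l \<in> \<rat>" "y = (\<Sum>l\<in>T. d l *\<^sub>R l)"
    using assms(2) unfolding rat_span_def by blast
  define e where "e l = (if l \<in> S then c l else 0) + (if l \<in> T then d l else 0)" for l
  have x: "(\<Sum>l\<in>S \<union> T. (if l \<in> S then c l else 0) *\<^sub>R l) = x"
    unfolding S(4) by (rule sum.mono_neutral_cong_right) (use S T in auto)
  have y: "(\<Sum>l\<in>S \<union> T. (if l \<in> T then d l else 0) *\<^sub>R l) = y"
    unfolding T(4) by (rule sum.mono_neutral_cong_right) (use S T in auto)
  have "x + y = (\<Sum>l\<in>S \<union> T. e l *\<^sub>R l)"
    unfolding e_def scaleR_add_left sum.distrib x y ..
  moreover have "\<forall>l\<in>S \<union> T. e l \<in> \<rat>" using S(3) T(3) by (auto simp: e_def)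
  ultimately show ?thesis
    unfolding rat_span_def using S(1,2) T(1,2) by (intro CollectI exI[of _ "S \<union> T"] exI[of _ e]) auto
qed

lemma add_lattice_notin_rat_span:
  assumes "z \<notin> rat_span L" "l \<in> L"
  shows "z + l \<notin> rat_span L"
proof
  assume "z + l \<in> rat_span L"
  from rat_span_add[OF this rat_span_scaleR[of "-1", OF _ assms(2)]] assms(1)
  show False by simp
qed

lemma rat_multiples_distinct_mod_lattice:
  assumes "is_lattice L" "w \<notin> rat_span L" "r \<in> \<rat>" "r' \<in> \<rat>" "\<mu> \<in> L" "\<mu>' \<in> L"
    and "r *\<^sub>R w - \<mu> = r' *\<^sub>R w - \<mu>'"
  shows "r = r'"
proof (rule ccontr)
  assume "r \<noteq> r'"
  then have "w = inverse (r - r') *\<^sub>R ((r - r') *\<^sub>R w)" by simp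
  also have "(r - r') *\<^sub>R w = \<mu> - \<mu>'"
    using assms(7) by (simp add: algebra_simps)
  finally have "w = inverse (r - r') *\<^sub>R (\<mu> - \<mu>')" .
  moreover have "inverse (r - r') \<in> \<rat>" using assms(3,4) by simp
  ultimately have "w \<in> rat_span L"
    using rat_span_scaleR lattice_diff[OF assms(1,5,6)] by metis
  with assms(2) show False ..
qed

lemma mult_independent_exponent_unique:
  assumes indep: "mult_independent p q" and "0 < p" "0 < q"
  shows "p ^ a * q ^ i' = p ^ a' * q ^ i \<Longrightarrow> a = a'"
proof (induction a a' arbitrary: i i' rule: linorder_wlog)
  case (le a a')
  have "p ^ a' = p ^ a * p ^ (a' - a)" using le.hyps by (simp flip: power_add)
  then have qi': "q ^ i' = p ^ (a' - a) * q ^ i" using le.prems \<open>0 < p\<close> by simp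
  show ?case
  proof (cases "i \<le> i'")
    case True
    then have "q ^ i * q ^ (i' - i) = q ^ i * p ^ (a' - a)"
      using qi' by (simp add: mult.commute flip: power_add)
    then have "p ^ (a' - a) = q ^ (i' - i)" using \<open>0 < q\<close> by simp
    then show ?thesis using indep le.hyps unfolding mult_independent_def by fastforce
  next
    case False
    then have "q ^ i = q ^ i' * q ^ (i - i')" by (simp flip: power_add)
    then have "q ^ i' * (p ^ (a' - a) * q ^ (i - i')) = p ^ (a' - a) * q ^ i"
      by (simp only: mult_ac)
    also have "\<dots> = q ^ i'" using qi' by simp
    finally have "p ^ (a' - a) * q ^ (i - i') = 1"
      using \<open>0 < q\<close> mult_cancel_left2 by fastforce
    then have "p ^ 0 = q ^ (i - i')" by (metis nat_mult_eq_1_iff power_0)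
    then show ?thesis using indep False unfolding mult_independent_def by fastforce
  qed
next
  case (sym a a')
  then show ?case by metis
qed

lemma dilation_exponent_unique:
  assumes "mult_independent p q" "0 < p" "0 < q"
    and "real p ^ a / real q ^ i = real p ^ a' / real q ^ i'"
  shows "a = a'"
proof -
  have "real (p ^ a * q ^ i') = real (p ^ a' * q ^ i)"
    using assms(3,4) by (simp add: field_simps)
  then show ?thesis using mult_independent_exponent_unique[OF assms(1-3)] by (simp only: of_nat_eq_iff)
qed

lemma contracting_orbit_escapes:
  fixes x :: "'a::real_normed_vector"
  assumes "x \<noteq> 0" "1 < c" "0 < e" "finite {y \<in> cball 0 e. P y}"
  shows "\<exists>i. \<not> P (inverse c ^ i *\<^sub>R x)"
proof (rule ccontr)
  assume "\<not> ?thesis"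
  then have orbit: "P (inverse c ^ i *\<^sub>R x)" for i by blast
  have "0 < e / norm x" using assms(1,3) by simp
  moreover have "inverse c < 1" using assms(2) by (simp add: inverse_less_1_iff)
  ultimately obtain N where N: "inverse c ^ N < e / norm x"
    using real_arch_pow_inv by blast
  have "inverse c ^ i *\<^sub>R x \<in> cball 0 e" if "N \<le> i" for i
  proof -
    have "norm (inverse c ^ i *\<^sub>R x) \<le> inverse c ^ N * norm x"
      using that assms(2) by (auto intro!: mult_right_mono power_decreasing simp: inverse_le_1_iff)
    also have "\<dots> < e" using N assms(1) by (simp add: less_divide_eq)
    finally show ?thesis by simp
  qed
  then have "(\<lambda>i. inverse c ^ i *\<^sub>R x) ` {N..} \<subseteq> {y \<in> cball 0 e. P y}" using orbit by auto
  moreover have "inj (\<lambda>i. inverse c ^ i *\<^sub>R x)"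
  proof (rule injI)
    fix i j assume "inverse c ^ i *\<^sub>R x = inverse c ^ j *\<^sub>R x"
    then have "c ^ i = c ^ j" using assms(1) by (simp add: scaleR_cancel_right power_inverse)
    then show "i = j" using assms(2) by (simp add: power_inject_exp)
  qed
  ultimately have "finite {N..}"
    using assms(4) by (metis finite_subset inj_on_finite inj_on_subset subset_UNIV)
  then show False using infinite_Ici by blast
qed

lemma (in group) l_coset_eq_subgroup_cancel:
  assumes "subgroup H G" "b \<in> H" "M \<subseteq> carrier G" "b <#\<^bsub>G\<^esub> M = H"
  shows "M = H"
proof -
  have b: "b \<in> carrier G" "inv b \<in> H"
    using assms(1,2) by (auto simp: subgroup.mem_carrier subgroup.m_inv_closed)
  have "M = inv b <#\<^bsub>G\<^esub> (b <#\<^bsub>G\<^esub> M)"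
    using assms(3) b(1) by (simp add: lcos_m_assoc lcos_mult_one)
  also have "\<dots> = H"
    using assms(1,4) b by (simp add: coset_join3 subgroup.mem_carrier)
  finally show ?thesis .
qed

locale equivariant_coset_sheaf =
  fixes G :: "'v::euclidean_space \<Rightarrow> 'g monoid"
    and sect :: "'v set \<Rightarrow> ('v \<Rightarrow> 'g) \<Rightarrow> bool"
    and H :: "'v \<Rightarrow> 'g set"
    and iota :: "'v \<Rightarrow> 'v \<Rightarrow> 'g \<Rightarrow> 'g"
    and phi :: "real \<Rightarrow> 'v \<Rightarrow> 'g \<Rightarrow> 'g"
  assumes equivariant: "equivariant_sheaf_of_cosets G sect H iota phi"
begin

lemma sheaf_of_groups: "sheaf_of_groups G sect"
  using equivariant unfolding equivariant_sheaf_of_cosets_def by (elim conjE)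

lemma stalk_group: "group (G x)"
  using sheaf_of_groups unfolding sheaf_of_groups_def by (elim conjE allE)

lemma sect_in_carrier:
  assumes "sect U f" "x \<in> U"
  shows "f x \<in> carrier (G x)"
proof -
  have "\<forall>U f. sect U f \<longrightarrow> open U \<and> (\<forall>x\<in>U. f x \<in> carrier (G x))"
    using sheaf_of_groups unfolding sheaf_of_groups_def by (elim conjE)
  with assms show ?thesis by blast
qed

lemma stalk_subgroup: "subgroup (H x) (G x)"
proof -
  have "subsheaf_of_subgroups G sect H"
    using equivariant unfolding equivariant_sheaf_of_cosets_def by (elim conjE)
  then show ?thesis unfolding subsheaf_of_subgroups_def by (elim conjE allE)
qed

lemma sect_finite_outside_subgroup:
  assumes "sect U f" "compact K" "K \<subseteq> U"
  shows "finite {x \<in> K. f x \<notin> H x}"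
proof -
  have "\<forall>U f K. sect U f \<and> compact K \<and> K \<subseteq> U \<longrightarrow> finite {x \<in> K. f x \<notin> H x}"
    using equivariant unfolding equivariant_sheaf_of_cosets_def by (elim conjE)
  with assms show ?thesis by blast
qed

lemma iota_hom: "iota v x \<in> hom (G x) (G (x + v))"
proof -
  have "\<forall>v x. iota v x \<in> iso (G x) (G (x + v))"
    using equivariant unfolding equivariant_sheaf_of_cosets_def by (elim conjE)
  then show ?thesis unfolding iso_def by blast
qed

lemma iota_image_subgroup: "iota v x ` H x = H (x + v)"
proof -
  have "\<forall>v x. iota v x ` H x = H (x + v)"
    using equivariant unfolding equivariant_sheaf_of_cosets_def by (elim conjE)
  then show ?thesis by blast
qed

lemma phi_inj_on:
  assumes "c \<noteq> 0"
  shows "inj_on (phi c x) (carrier (G x))"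
proof -
  have "\<forall>p x. p \<noteq> 0 \<longrightarrow> phi p x \<in> iso (G x) (G (p *\<^sub>R x))"
    using equivariant unfolding equivariant_sheaf_of_cosets_def by (elim conjE)
  with assms show ?thesis unfolding iso_def bij_betw_def by blast
qed

lemma phi_image_subgroup:
  assumes "c \<noteq> 0"
  shows "phi c x ` H x = H (c *\<^sub>R x)"
proof -
  have "\<forall>p x. p \<noteq> 0 \<longrightarrow> phi p x ` H x = H (p *\<^sub>R x)"
    using equivariant unfolding equivariant_sheaf_of_cosets_def by (elim conjE)
  with assms show ?thesis by blast
qed

lemma iota_phi_commute:
  assumes "c \<noteq> 0" "g \<in> carrier (G x)"
  shows "iota (c *\<^sub>R v) (c *\<^sub>R x) (phi c x g) = phi c (x + v) (iota v x g)"
proof -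
  have "\<forall>p v x g. p \<noteq> 0 \<and> g \<in> carrier (G x) \<longrightarrow>
      iota (p *\<^sub>R v) (p *\<^sub>R x) (phi p x g) = phi p (x + v) (iota v x g)"
    using equivariant unfolding equivariant_sheaf_of_cosets_def by (elim conjE)
  with assms show ?thesis by blast
qed

lemma coset_section_is_coset:
  assumes "coset_global_section G sect H s"
  obtains g where "g \<in> carrier (G x)" "s x = g <#\<^bsub>G x\<^esub> H x"
  using assms sect_in_carrier unfolding coset_global_section_def by blast

lemma coset_section_subset_carrier:
  assumes "coset_global_section G sect H s"
  shows "s x \<subseteq> carrier (G x)"
  by (metis coset_section_is_coset[OF assms] group.l_coset_subset_G stalk_group stalk_subgroup
      subgroup.subset)

lemma coset_section_support_locally_finite:
  assumes "coset_global_section G sect H s"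
  obtains e where "0 < e" "finite {y \<in> cball x e. s y \<noteq> H y}"
proof -
  obtain W f where W: "open W" "x \<in> W" "sect W f" and s_eq: "\<forall>y\<in>W. s y = f y <#\<^bsub>G y\<^esub> H y"
    using assms unfolding coset_global_section_def by blast
  obtain e where e: "0 < e" "cball x e \<subseteq> W"
    using W(1,2) open_contains_cball by blast
  have "f y \<notin> H y" if "y \<in> W" "s y \<noteq> H y" for y
    using that s_eq group.coset_join3[OF stalk_group sect_in_carrier[OF W(3)] stalk_subgroup] by auto
  then have "{y \<in> cball x e. s y \<noteq> H y} \<subseteq> {y \<in> cball x e. f y \<notin> H y}"
    using e(2) by blast
  moreover have "finite {y \<in> cball x e. f y \<notin> H y}"
    using sect_finite_outside_subgroup[OF W(3) compact_cball e(2)] .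
  ultimately show ?thesis using that e(1) finite_subset by blast
qed

lemma translation_eq_from_dilated:
  assumes s: "coset_global_section G sect H s" and "c \<noteq> 0"
    and A_car: "A (c *\<^sub>R y) \<in> carrier (G (c *\<^sub>R y))"
    and A_per: "A (c *\<^sub>R y + c *\<^sub>R \<mu>) = iota (c *\<^sub>R \<mu>) (c *\<^sub>R y) (A (c *\<^sub>R y))"
    and dil: "\<And>x. phi c (inverse c *\<^sub>R x) ` s (inverse c *\<^sub>R x) = A x <#\<^bsub>G x\<^esub> s x"
    and dilated: "s (c *\<^sub>R y + c *\<^sub>R \<mu>) = iota (c *\<^sub>R \<mu>) (c *\<^sub>R y) ` s (c *\<^sub>R y)"
  shows "s (y + \<mu>) = iota \<mu> y ` s y"
proof -
  let ?X = "c *\<^sub>R y" and ?M = "c *\<^sub>R \<mu>"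
  have "phi c (y + \<mu>) ` s (y + \<mu>) = A (?X + ?M) <#\<^bsub>G (?X + ?M)\<^esub> s (?X + ?M)"
    using dil[of "?X + ?M"] \<open>c \<noteq> 0\<close> by (simp add: scaleR_add_right)
  also have "\<dots> = iota ?M ?X (A ?X) <#\<^bsub>G (?X + ?M)\<^esub> iota ?M ?X ` s ?X"
    using A_per dilated by simp
  also have "\<dots> = iota ?M ?X ` (A ?X <#\<^bsub>G ?X\<^esub> s ?X)"
    by (rule coset_hom(1)[symmetric, OF iota_hom coset_section_subset_carrier[OF s] A_car])
  also have "\<dots> = iota ?M ?X ` phi c y ` s y"
    using dil[of ?X] \<open>c \<noteq> 0\<close> by simp
  also have "\<dots> = phi c (y + \<mu>) ` iota \<mu> y ` s y"
    unfolding image_image using coset_section_subset_carrier[OF s]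
    by (intro image_cong refl) (meson iota_phi_commute[OF \<open>c \<noteq> 0\<close>] subsetD)
  finally have "phi c (y + \<mu>) ` s (y + \<mu>) = phi c (y + \<mu>) ` iota \<mu> y ` s y" .
  moreover have "iota \<mu> y ` s y \<subseteq> carrier (G (y + \<mu>))"
    using hom_carrier[OF iota_hom] coset_section_subset_carrier[OF s] by blast
  ultimately show ?thesis
    using inj_on_image_eq_iff[OF phi_inj_on[OF \<open>c \<noteq> 0\<close>] coset_section_subset_carrier[OF s]] by simp
qed

lemma translation_defect_dilate_pow:
  assumes s: "coset_global_section G sect H s" and lat: "is_lattice \<Lambda>" and "0 < p"
    and A_sec: "sect UNIV A" and A_per: "\<forall>l\<in>\<Lambda>. \<forall>x. iota l (x - l) (A (x - l)) = A x"
    and dil: "\<And>x. phi (real p) (inverse (real p) *\<^sub>R x) ` s (inverse (real p) *\<^sub>R x)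
                = A x <#\<^bsub>G x\<^esub> s x"
    and "l \<in> \<Lambda>" and defect: "s (z + l) \<noteq> iota l z ` s z"
  shows "s (real p ^ a *\<^sub>R z + real p ^ a *\<^sub>R l)
           \<noteq> iota (real p ^ a *\<^sub>R l) (real p ^ a *\<^sub>R z) ` s (real p ^ a *\<^sub>R z)"
proof (induction a)
  case 0
  then show ?case using defect by simp
next
  case (Suc a)
  let ?y = "real p ^ a *\<^sub>R z" and ?\<mu> = "real p ^ a *\<^sub>R l"
  have "real p *\<^sub>R ?\<mu> \<in> \<Lambda>"
    using lattice_scaleR_of_nat[OF lat \<open>l \<in> \<Lambda>\<close>, of "p ^ Suc a"] by simp
  then have "A (real p *\<^sub>R ?y + real p *\<^sub>R ?\<mu>)
      = iota (real p *\<^sub>R ?\<mu>) (real p *\<^sub>R ?y) (A (real p *\<^sub>R ?y))"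
    using A_per by (metis add_diff_cancel_right')
  then show ?case
    using translation_eq_from_dilated[OF s _ sect_in_carrier[OF A_sec] _ dil] Suc.IH \<open>0 < p\<close>
    by (auto simp: mult.assoc)
qed

lemma coset_section_nontrivial_contract:
  assumes s: "coset_global_section G sect H s" and "c \<noteq> 0"
    and dil: "\<And>x. phi c (inverse c *\<^sub>R x) ` s (inverse c *\<^sub>R x) = B x <#\<^bsub>G x\<^esub> s x"
    and "B y \<in> H y" "s y \<noteq> H y"
  shows "s (inverse c *\<^sub>R y) \<noteq> H (inverse c *\<^sub>R y)"
proof
  assume "s (inverse c *\<^sub>R y) = H (inverse c *\<^sub>R y)"
  then have "B y <#\<^bsub>G y\<^esub> s y = H y"
    using dil[of y] phi_image_subgroup[OF \<open>c \<noteq> 0\<close>] \<open>c \<noteq> 0\<close> by simp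
  then have "s y = H y"
    by (rule group.l_coset_eq_subgroup_cancel[OF stalk_group stalk_subgroup \<open>B y \<in> H y\<close>
          coset_section_subset_carrier[OF s]])
  with \<open>s y \<noteq> H y\<close> show False ..
qed

lemma support_contraction_outside_subgroup:
  assumes s: "coset_global_section G sect H s" and "1 < c"
    and dil: "\<And>x. phi c (inverse c *\<^sub>R x) ` s (inverse c *\<^sub>R x) = B x <#\<^bsub>G x\<^esub> s x"
    and "x \<noteq> 0" "s x \<noteq> H x"
  shows "\<exists>i. B (inverse c ^ i *\<^sub>R x) \<notin> H (inverse c ^ i *\<^sub>R x)"
proof (rule ccontr)
  assume "\<not> ?thesis"
  then have B_in: "B (inverse c ^ i *\<^sub>R x) \<in> H (inverse c ^ i *\<^sub>R x)" for i by blast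
  have orbit: "s (inverse c ^ i *\<^sub>R x) \<noteq> H (inverse c ^ i *\<^sub>R x)" for i
  proof (induction i)
    case 0
    then show ?case using \<open>s x \<noteq> H x\<close> by simp
  next
    case (Suc i)
    then show ?case using coset_section_nontrivial_contract[OF s _ dil B_in] \<open>1 < c\<close> by simp
  qed
  obtain e where "0 < e" "finite {y \<in> cball 0 e. s y \<noteq> H y}"
    by (rule coset_section_support_locally_finite[OF s])
  from contracting_orbit_escapes[OF \<open>x \<noteq> 0\<close> \<open>1 < c\<close> this] orbit show False by blast
qed

lemma periodic_outside_subgroup:
  assumes "\<forall>l\<in>\<Lambda>. \<forall>x. iota l (x - l) (B (x - l)) = B x" "\<mu> \<in> \<Lambda>" "B x \<notin> H x"
  shows "B (x - \<mu>) \<notin> H (x - \<mu>)"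
proof
  assume "B (x - \<mu>) \<in> H (x - \<mu>)"
  then have "iota \<mu> (x - \<mu>) (B (x - \<mu>)) \<in> H (x - \<mu> + \<mu>)"
    using iota_image_subgroup by blast
  with assms show False by simp
qed

lemma finite_rat_multiples_outside_subgroup:
  assumes lat: "is_lattice \<Lambda>" and B_sec: "sect UNIV B"
    and B_per: "\<forall>l\<in>\<Lambda>. \<forall>x. iota l (x - l) (B (x - l)) = B x"
    and w: "w \<notin> rat_span \<Lambda>"
  shows "finite {r \<in> \<rat>. B (r *\<^sub>R w) \<notin> H (r *\<^sub>R w)}" (is "finite ?Q")
proof -
  obtain R where "\<And>x. \<exists>\<mu>\<in>\<Lambda>. norm (x - \<mu>) \<le> R"
    using lattice_covering_radius[OF lat] by blast
  then have "\<forall>r. \<exists>m. m \<in> \<Lambda> \<and> norm (r *\<^sub>R w - m) \<le> R" by blast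
  from choice[OF this] obtain \<mu> where \<mu>: "\<And>r. \<mu> r \<in> \<Lambda>" "\<And>r. norm (r *\<^sub>R w - \<mu> r) \<le> R"
    by blast
  define g where "g r = r *\<^sub>R w - \<mu> r" for r
  have "g ` ?Q \<subseteq> {x \<in> cball 0 R. B x \<notin> H x}"
    using periodic_outside_subgroup[OF B_per \<mu>(1)] \<mu>(2) by (auto simp: g_def)
  moreover have "finite {x \<in> cball 0 R. B x \<notin> H x}"
    by (rule sect_finite_outside_subgroup[OF B_sec compact_cball]) simp
  moreover have "inj_on g ?Q"
    using rat_multiples_distinct_mod_lattice[OF lat w _ _ \<mu>(1) \<mu>(1)] by (auto simp: g_def inj_on_def)
  ultimately show ?thesis using inj_on_finite by blast
qed

lemma finite_dilation_orbit_in_support: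
  assumes s: "coset_global_section G sect H s" and lat: "is_lattice \<Lambda>"
    and indep: "mult_independent p q" and "0 < p" "1 < q"
    and B_sec: "sect UNIV B" and B_per: "\<forall>l\<in>\<Lambda>. \<forall>x. iota l (x - l) (B (x - l)) = B x"
    and dil: "\<And>x. phi (real q) (inverse (real q) *\<^sub>R x) ` s (inverse (real q) *\<^sub>R x)
                = B x <#\<^bsub>G x\<^esub> s x"
    and w: "w \<notin> rat_span \<Lambda>"
  shows "finite {a. s (real p ^ a *\<^sub>R w) \<noteq> H (real p ^ a *\<^sub>R w)}" (is "finite ?S")
proof -
  have "w \<noteq> 0" using w zero_in_rat_span by auto
  have "\<forall>a\<in>?S. \<exists>i. B ((real p ^ a / real q ^ i) *\<^sub>R w) \<notin> H ((real p ^ a / real q ^ i) *\<^sub>R w)"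
  proof
    fix a assume "a \<in> ?S"
    have "1 < real q" using \<open>1 < q\<close> by simp
    moreover have "real p ^ a *\<^sub>R w \<noteq> 0" using \<open>w \<noteq> 0\<close> \<open>0 < p\<close> by simp
    ultimately obtain i where
      "B (inverse (real q) ^ i *\<^sub>R real p ^ a *\<^sub>R w) \<notin> H (inverse (real q) ^ i *\<^sub>R real p ^ a *\<^sub>R w)"
      using support_contraction_outside_subgroup[OF s _ dil] \<open>a \<in> ?S\<close> by blast
    moreover have "inverse (real q) ^ i *\<^sub>R real p ^ a *\<^sub>R w = (real p ^ a / real q ^ i) *\<^sub>R w"
      by (simp add: power_inverse divide_inverse mult.commute)
    ultimately show "\<exists>i. B ((real p ^ a / real q ^ i) *\<^sub>R w) \<notin> H ((real p ^ a / real q ^ i) *\<^sub>R w)"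
      by metis
  qed
  from bchoice[OF this] obtain i
    where i: "\<forall>a\<in>?S. B ((real p ^ a / real q ^ i a) *\<^sub>R w) \<notin> H ((real p ^ a / real q ^ i a) *\<^sub>R w)"
    by blast
  define r where "r a = real p ^ a / real q ^ i a" for a
  have "r ` ?S \<subseteq> {r \<in> \<rat>. B (r *\<^sub>R w) \<notin> H (r *\<^sub>R w)}"
    using i by (auto simp: r_def)
  moreover have "inj_on r ?S"
    using dilation_exponent_unique[OF indep \<open>0 < p\<close>] \<open>1 < q\<close> by (auto simp: r_def inj_on_def)
  ultimately show ?thesis
    using inj_on_finite finite_rat_multiples_outside_subgroup[OF lat B_sec B_per w] by blast
qed

lemma translation_equivariant_off_rat_span:
  assumes s: "coset_global_section G sect H s" and lat: "is_lattice \<Lambda>"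
    and indep: "mult_independent p q" and "0 < p" "1 < q"
    and A_sec: "sect UNIV A" and A_per: "\<forall>l\<in>\<Lambda>. \<forall>x. iota l (x - l) (A (x - l)) = A x"
    and B_sec: "sect UNIV B" and B_per: "\<forall>l\<in>\<Lambda>. \<forall>x. iota l (x - l) (B (x - l)) = B x"
    and dil_p: "\<And>x. phi (real p) (inverse (real p) *\<^sub>R x) ` s (inverse (real p) *\<^sub>R x)
                  = A x <#\<^bsub>G x\<^esub> s x"
    and dil_q: "\<And>x. phi (real q) (inverse (real q) *\<^sub>R x) ` s (inverse (real q) *\<^sub>R x)
                  = B x <#\<^bsub>G x\<^esub> s x"
    and z: "z \<notin> rat_span \<Lambda>" and "l \<in> \<Lambda>"
  shows "s (z + l) = iota l z ` s z"
proof (rule ccontr)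
  assume defect: "s (z + l) \<noteq> iota l z ` s z"
  define support where "support w = {a. s (real p ^ a *\<^sub>R w) \<noteq> H (real p ^ a *\<^sub>R w)}" for w
  have "a \<in> support z \<union> support (z + l)" for a
  proof (rule ccontr)
    let ?z = "real p ^ a *\<^sub>R z" and ?l = "real p ^ a *\<^sub>R l"
    assume "a \<notin> support z \<union> support (z + l)"
    then have "s (?z + ?l) = H (?z + ?l)" "s ?z = H ?z"
      by (simp_all add: support_def scaleR_add_right)
    then have "s (?z + ?l) = iota ?l ?z ` s ?z" by (simp add: iota_image_subgroup)
    with translation_defect_dilate_pow[OF s lat \<open>0 < p\<close> A_sec A_per dil_p \<open>l \<in> \<Lambda>\<close> defect]
    show False by contradiction
  qed
  then have "UNIV = support z \<union> support (z + l)" by blast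
  moreover have "finite (support z)"
    unfolding support_def
    by (rule finite_dilation_orbit_in_support[OF s lat indep \<open>0 < p\<close> \<open>1 < q\<close> B_sec B_per dil_q z])
  moreover have "finite (support (z + l))"
    unfolding support_def
    by (rule finite_dilation_orbit_in_support[OF s lat indep \<open>0 < p\<close> \<open>1 < q\<close> B_sec B_per dil_q
          add_lattice_notin_rat_span[OF z \<open>l \<in> \<Lambda>\<close>]])
  ultimately show False by (metis finite_Un infinite_UNIV_nat)
qed

end

theorem proposition2p6:
  fixes G :: "'v::euclidean_space \<Rightarrow> 'g monoid"
    and sect :: "'v set \<Rightarrow> ('v \<Rightarrow> 'g) \<Rightarrow> bool"
    and H :: "'v \<Rightarrow> 'g set"
    and iota :: "'v \<Rightarrow> 'v \<Rightarrow> 'g \<Rightarrow> 'g"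
    and phi :: "real \<Rightarrow> 'v \<Rightarrow> 'g \<Rightarrow> 'g"
    and \<Lambda> :: "'v set"
    and p q :: nat
    and s :: "'v \<Rightarrow> 'g set"
    and A B :: "'v \<Rightarrow> 'g"
  assumes eq: "equivariant_sheaf_of_cosets G sect H iota phi"
    and lat: "is_lattice \<Lambda>"
    and p2: "p \<ge> 2" and q2: "q \<ge> 2"
    and indep: "mult_independent p q"
    and s_sec: "coset_global_section G sect H s"
    and A_sec: "sect UNIV A" and B_sec: "sect UNIV B"
    and A_per: "\<forall>l\<in>\<Lambda>. \<forall>x. iota l (x - l) (A (x - l)) = A x"
    and B_per: "\<forall>l\<in>\<Lambda>. \<forall>x. iota l (x - l) (B (x - l)) = B x"
    and sp: "\<forall>x. phi (real p) (inverse (real p) *\<^sub>R x) ` s (inverse (real p) *\<^sub>R x)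
               = A x <#\<^bsub>G x\<^esub> s x"
    and sq: "\<forall>x. phi (real q) (inverse (real q) *\<^sub>R x) ` s (inverse (real q) *\<^sub>R x)
               = B x <#\<^bsub>G x\<^esub> s x"
  shows "(\<exists>\<Lambda>'. is_lattice \<Lambda>' \<and> \<Lambda>' \<subseteq> \<Lambda> \<and>
            (\<forall>z. z \<notin> rat_span \<Lambda> \<longrightarrow> (\<forall>l\<in>\<Lambda>'. s (z + l) = iota l z ` s z)))
       \<and> (coprime p q \<longrightarrow>
            (\<forall>z. z \<notin> rat_span \<Lambda> \<longrightarrow> (\<forall>l\<in>\<Lambda>. s (z + l) = iota l z ` s z)))"
proof -
  interpret equivariant_coset_sheaf G sect H iota phi
    using eq by unfold_locales
  have "s (z + l) = iota l z ` s z" if "z \<notin> rat_span \<Lambda>" "l \<in> \<Lambda>" for z l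
    using translation_equivariant_off_rat_span[OF s_sec lat indep _ _ A_sec A_per B_sec B_per
        sp[rule_format] sq[rule_format] that] p2 q2
    by simp
  then show ?thesis using lat by blast
qed

end
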